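(* Let $p$ be a prime, let $k\geq1$ and $s\geq 1$ be integers, and let $n=p^s+1$. Let $H$ be a pro-$p$ group satisfying one of the following conditions, where $I$ is an arbitrary index set and products carry the product topology: (1) $H\simeq\prod_I\mathbb{Z}/p^{s+1}\mathbb{Z}$; (2) $H\simeq U\rtimes V$ with $U=\prod_I\mathbb{Z}/p^{s+1}\mathbb{Z}$ and $V=\mathbb{Z}/p^{s+1}\mathbb{Z}$, and there is a generator $\sigma$ of $V$ such that $\sigma\tau\sigma^{-1}=\tau^{p^k+1}$ for all $\tau\in U$; (3) $p=2$, $H\simeq U\rtimes V$ with $U=\prod_I\mathbb{Z}/2^{s+1}\mathbb{Z}$, $V=\mathbb{Z}/2^{s+1}\mathbb{Z}$, and there is a generator $\sigma$ of $V$ with $\sigma\tau\sigma^{-1}=\tau^{-(2^k+1)}$ for all $\tau\in U$; (4) $p=2$, $H\simeq U\rtimes V$ with $U=\prod_I\mathbb{Z}/2^{s+1}\mathbb{Z}$, $V=\mathbb{Z}/2^{s+1}\mathbb{Z}$, and there is a generator $\sigma$ of $V$ with $\sigma\tau\sigma^{-1}=\tau^{-1}$ for all $\tau\in U$. Then for every $u\in H$ with $u\neq1$ there exists a continuous homomorphism $\rho\colon H\to\mathrm{U}_n(\mathbb{F}_p)$ with $\rho(u)\neq1$.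
   Context: $\mathrm{U}_n(\mathbb{F}_p)$ denotes the group of upper-triangular unipotent $n\times n$ matrices over $\mathbb{F}_p$. *)

theory Defs
  imports "HOL-Algebra.Group" "HOL-Analysis.Analysis"
begin

text \<open>Matrices are functions nat => nat => int, indices 0..n-1, entries in {0..<p}
  (representing F_p = Z/pZ), zero outside the n x n block; multiplication is
  the matrix product reduced mod p.\<close>
definition unitri :: "nat \<Rightarrow> int \<Rightarrow> (nat \<Rightarrow> nat \<Rightarrow> int) monoid" where
  "unitri n p = \<lparr>carrier = {A. (\<forall>i j. A i j \<in> {0..<p})
                              \<and> (\<forall>i j. (n \<le> i \<or> n \<le> j) \<longrightarrow> A i j = 0)
                              \<and> (\<forall>i<n. A i i = 1)
                              \<and> (\<forall>i j. j < i \<longrightarrow> A i j = 0)},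
     monoid.mult = (\<lambda>A B. \<lambda>i j. if i < n \<and> j < n then (\<Sum>l<n. A i l * B l j) mod p else 0),
     one = (\<lambda>i j. if i < n \<and> j < n \<and> i = j then 1 else 0)\<rparr>"

definition cyc_prod :: "int \<Rightarrow> 'i set \<Rightarrow> ('i \<Rightarrow> int) monoid" where
  "cyc_prod m I = \<lparr>carrier = PiE I (\<lambda>_. {0..<m}),
     monoid.mult = (\<lambda>f g. \<lambda>i\<in>I. (f i + g i) mod m),
     one = (\<lambda>i\<in>I. 0)\<rparr>"

definition cyc_prod_top :: "int \<Rightarrow> 'i set \<Rightarrow> ('i \<Rightarrow> int) topology" where
  "cyc_prod_top m I = product_topology (\<lambda>_. discrete_topology {0..<m}) I"

text \<open>Semidirect product U \<rtimes> V, U = prod_I Z/mZ, V = Z/mZ, where the generator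
  1 = sigma of V acts by sigma tau sigma^-1 = tau^c.  The pair (tau, a)
  stands for tau sigma^a.\<close>
definition sdprod :: "int \<Rightarrow> int \<Rightarrow> 'i set \<Rightarrow> (('i \<Rightarrow> int) \<times> int) monoid" where
  "sdprod m c I = \<lparr>carrier = PiE I (\<lambda>_. {0..<m}) \<times> {0..<m},
     monoid.mult = (\<lambda>(f, a) (g, b). ((\<lambda>i\<in>I. (f i + c ^ nat a * g i) mod m), (a + b) mod m)),
     one = ((\<lambda>i\<in>I. 0), 0)\<rparr>"

definition sdprod_top :: "int \<Rightarrow> 'i set \<Rightarrow> (('i \<Rightarrow> int) \<times> int) topology" where
  "sdprod_top m I = prod_topology (cyc_prod_top m I) (discrete_topology {0..<m})"

end

theory Submission
  imports Defs "HOL-Computational_Algebra.Polynomial" "HOL-Computational_Algebra.Primes"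
    "HOL-Number_Theory.Cong"
begin

(*
  Let M = p^(s+1). The pairs (e, c) with c = 1 mod p form the affine group x \<mapsto> e + c x of Z/MZ,
  which acts on F_p[X]/(X^n) by w \<mapsto> (1 + X)^e w((1 + X)^c - 1). In the basis X^(n-1), ..., 1 this
  action is upper unitriangular, and because (1 + X)^(p^j) = 1 + X^(p^j) mod p, the unit 1 + X has
  order exactly p^(s+1) there when p^s < n <= p^(s+1); so an affine map acts trivially only if its
  translation part e is 0. In each of the four cases c = 1 mod p, and a nontrivial element (tau, a)
  of U \<rtimes> V (or tau of U) has a nonzero translation part under one of the continuous homomorphisms
  (tau, a) \<mapsto> (a, 1) or (tau, a) \<mapsto> (tau_i, c^a) to the affine group.
*)

definition cong_trunc :: "nat \<Rightarrow> int \<Rightarrow> int poly \<Rightarrow> int poly \<Rightarrow> bool" where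
  "cong_trunc n P a b \<longleftrightarrow> (\<forall>i<n. [coeff a i = coeff b i] (mod P))"

lemma cong_trunc_refl [simp]: "cong_trunc n P a a"
  by (simp add: cong_trunc_def)

lemma cong_trunc_sym: "cong_trunc n P a b \<Longrightarrow> cong_trunc n P b a"
  by (simp add: cong_trunc_def cong_sym)

lemma cong_trunc_trans: "cong_trunc n P a b \<Longrightarrow> cong_trunc n P b c \<Longrightarrow> cong_trunc n P a c"
  unfolding cong_trunc_def using cong_trans by blast

lemma cong_trunc_diff:
  "cong_trunc n P a b \<Longrightarrow> cong_trunc n P c d \<Longrightarrow> cong_trunc n P (a - c) (b - d)"
  by (simp add: cong_trunc_def cong_diff)

lemma cong_trunc_add:
  "cong_trunc n P a b \<Longrightarrow> cong_trunc n P c d \<Longrightarrow> cong_trunc n P (a + c) (b + d)"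
  by (simp add: cong_trunc_def cong_add)

lemma cong_trunc_mult:
  assumes "cong_trunc n P a b" "cong_trunc n P c d"
  shows "cong_trunc n P (a * c) (b * d)"
  unfolding cong_trunc_def coeff_mult
proof (intro allI impI cong_sum cong_mult)
  fix i j assume "i < n" "j \<in> {..i}"
  then show "[coeff a j = coeff b j] (mod P)" "[coeff c (i - j) = coeff d (i - j)] (mod P)"
    using assms by (auto simp: cong_trunc_def)
qed

lemma cong_trunc_power: "cong_trunc n P a b \<Longrightarrow> cong_trunc n P (a ^ k) (b ^ k)"
  by (induction k) (auto intro: cong_trunc_mult)

lemma cong_trunc_pcompose_zero:
  assumes "coeff q 0 = 0" "cong_trunc n P d 0"
  shows "cong_trunc n P (pcompose d q) 0"
  using assms(2)
proof (induction d arbitrary: n)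
  case (pCons e d)
  obtain q' where q: "q = pCons 0 q'"
    using assms(1) by (metis pCons_cases coeff_pCons_0)
  show ?case
  proof (cases n)
    case (Suc n')
    have "[e = 0] (mod P)"
      using pCons.prems by (auto simp: Suc cong_trunc_def dest: spec[of _ 0])
    moreover have "cong_trunc n' P d 0"
      using pCons.prems by (auto simp: Suc cong_trunc_def dest: spec[of _ "Suc _"])
    then have "cong_trunc n' P (q' * pcompose d q) (q' * 0)"
      by (intro cong_trunc_mult pCons.IH) simp_all
    ultimately show ?thesis
      by (auto simp: Suc cong_trunc_def pcompose_pCons q less_Suc_eq_0_disj)
  qed (simp add: cong_trunc_def)
qed simp

lemma cong_trunc_pcompose_left:
  assumes "coeff q 0 = 0" "cong_trunc n P a b"
  shows "cong_trunc n P (pcompose a q) (pcompose b q)"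
proof -
  have "cong_trunc n P (a - b) 0"
    using assms(2) by (simp add: cong_trunc_def cong_iff_dvd_diff)
  then have "cong_trunc n P (pcompose (a - b) q) 0"
    by (rule cong_trunc_pcompose_zero[OF assms(1)])
  then show ?thesis
    by (simp add: cong_trunc_def cong_iff_dvd_diff pcompose_diff)
qed

lemma cong_trunc_pcompose_right:
  "cong_trunc n P q q' \<Longrightarrow> cong_trunc n P (pcompose a q) (pcompose a q')"
  by (induction a) (simp_all add: pcompose_pCons cong_trunc_add cong_trunc_mult)

lemma prime_dvd_prime_power_choose:
  assumes "prime p" "0 < i" "i < p ^ j"
  shows "p dvd (p ^ j choose i)"
proof (rule ccontr)
  assume "\<not> p dvd (p ^ j choose i)"
  then have "coprime (p ^ j) (p ^ j choose i)"
    using assms(1) by (simp add: prime_imp_coprime)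
  moreover have "p ^ j dvd i * (p ^ j choose i)"
    using times_binomial_minus1_eq[OF assms(2), of "p ^ j"] by simp
  ultimately have "p ^ j dvd i"
    by (simp add: coprime_dvd_mult_left_iff)
  then show False
    using assms(2,3) by (simp add: nat_dvd_not_less)
qed

abbreviation one_plus_X :: "int poly" where
  "one_plus_X \<equiv> [:1, 1:]"

lemma coeff_one_plus_X_power: "coeff (one_plus_X ^ m) i = int (m choose i)"
proof (cases "i \<le> m")
  case False
  then have "degree (one_plus_X ^ m) < i"
    by (simp add: degree_power_eq)
  then show ?thesis
    using False by (simp add: coeff_eq_0)
qed (simp add: coeff_linear_poly_power)

lemma one_plus_X_prime_power_cong:
  assumes "prime p"
  shows "cong_trunc n (int p) (one_plus_X ^ p ^ j) (1 + monom 1 (p ^ j))"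
  unfolding cong_trunc_def
proof (intro allI impI)
  fix i
  have "0 < p ^ j"
    using assms by (simp add: prime_gt_0_nat)
  consider "i = 0" | "i = p ^ j" | "0 < i" "i < p ^ j" | "p ^ j < i"
    by linarith
  then have "[int (p ^ j choose i) = coeff (1 + monom 1 (p ^ j)) i] (mod int p)"
  proof cases
    case 3
    then show ?thesis
      using prime_dvd_prime_power_choose[OF assms 3] by (simp add: coeff_monom cong_0_iff)
  qed (use \<open>0 < p ^ j\<close> in \<open>simp_all add: coeff_monom binomial_eq_0\<close>)
  then show "[coeff (one_plus_X ^ p ^ j) i = coeff (1 + monom 1 (p ^ j)) i] (mod int p)"
    by (simp only: coeff_one_plus_X_power)
qed

lemma coeff_one_plus_monom_power:
  assumes "0 < m"
  shows "coeff ((1 + monom 1 m) ^ u) m = int u"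
proof (induction u)
  case (Suc u)
  let ?q = "1 + monom 1 m :: int poly"
  have "coeff (?q ^ u) 0 = 1"
    using assms by (simp add: coeff_0_power)
  then have "coeff (monom 1 m * ?q ^ u) m = 1"
    by (simp add: coeff_monom_mult)
  moreover have "coeff (?q ^ Suc u) m = coeff (?q ^ u) m + coeff (monom 1 m * ?q ^ u) m"
    by (simp only: power_Suc distrib_right coeff_add mult_1)
  ultimately show ?case
    unfolding of_nat_Suc using Suc.IH by linarith
qed (use assms in simp)

lemma one_plus_X_power_cong_one:
  assumes "prime p" "n \<le> p ^ k"
  shows "cong_trunc n (int p) (one_plus_X ^ p ^ k) 1"
proof -
  have "cong_trunc n (int p) (1 + monom 1 (p ^ k)) 1"
    using assms(2) by (simp add: cong_trunc_def coeff_monom)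
  then show ?thesis
    using one_plus_X_prime_power_cong[OF assms(1)] cong_trunc_trans by blast
qed

lemma one_plus_X_power_cong_mod:
  assumes "cong_trunc n P (one_plus_X ^ m) 1" "e mod m = e' mod m"
  shows "cong_trunc n P (one_plus_X ^ e) (one_plus_X ^ e')"
proof -
  have reduce: "cong_trunc n P (one_plus_X ^ e) (one_plus_X ^ (e mod m))" for e
  proof -
    have "one_plus_X ^ e = (one_plus_X ^ m) ^ (e div m) * one_plus_X ^ (e mod m)"
      by (simp flip: power_mult power_add)
    moreover have "cong_trunc n P ((one_plus_X ^ m) ^ (e div m) * one_plus_X ^ (e mod m))
        (1 ^ (e div m) * one_plus_X ^ (e mod m))"
      by (intro cong_trunc_mult cong_trunc_power assms(1) cong_trunc_refl)
    ultimately show ?thesis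
      by simp
  qed
  have "cong_trunc n P (one_plus_X ^ (e mod m)) (one_plus_X ^ e')"
    using cong_trunc_sym[OF reduce[of e']] assms(2) by simp
  then show ?thesis
    using cong_trunc_trans[OF reduce[of e]] by blast
qed

lemma one_plus_X_power_not_cong_one:
  assumes "prime p" "p ^ s < n" "0 < e" "e < p ^ Suc s"
  shows "\<not> cong_trunc n (int p) (one_plus_X ^ e) 1"
proof
  (* With e = p^j u and p not dividing u, (1 + X)^e = (1 + X^(p^j))^u mod p, whose coefficient
     of X^(p^j) is u. *)
  assume cong: "cong_trunc n (int p) (one_plus_X ^ e) 1"
  define j where "j = multiplicity p e"
  have "p \<noteq> 1"
    using assms(1) by auto
  then obtain u where e: "e = p ^ j * u" and u: "\<not> p dvd u"
    using multiplicity_decompose'[of e p] assms(3) unfolding j_def by auto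
  have "p ^ j \<le> e"
    using e assms(3) by (intro dvd_imp_le) simp_all
  then have "p ^ j < p ^ Suc s"
    using assms(4) by linarith
  then have "j < Suc s"
    using assms(1) by (metis power_less_imp_less_exp prime_gt_1_nat)
  then have "p ^ j \<le> p ^ s"
    using assms(1) by (intro power_increasing) (simp_all add: prime_gt_0_nat Suc_le_eq)
  then have j: "0 < p ^ j" "p ^ j < n"
    using assms(1,2) by (simp_all add: prime_gt_0_nat)
  have "cong_trunc n (int p) (one_plus_X ^ e) ((1 + monom 1 (p ^ j)) ^ u)"
    unfolding e power_mult by (intro cong_trunc_power one_plus_X_prime_power_cong assms(1))
  then have "cong_trunc n (int p) ((1 + monom 1 (p ^ j)) ^ u) 1"
    using cong_trunc_trans[OF cong_trunc_sym cong] by blast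
  then have "[coeff ((1 + monom 1 (p ^ j)) ^ u) (p ^ j) = coeff 1 (p ^ j)] (mod int p)"
    using j(2) unfolding cong_trunc_def by blast
  moreover have "coeff (1 :: int poly) (p ^ j) = 0"
    using j(1) by simp
  ultimately have "int p dvd int u"
    by (simp only: coeff_one_plus_monom_power[OF j(1)] cong_0_iff)
  then show False
    using u by (simp only: int_dvd_int_iff)
qed

definition affine_op :: "nat \<Rightarrow> nat \<Rightarrow> int poly \<Rightarrow> int poly" where
  "affine_op e c w = one_plus_X ^ e * pcompose w (one_plus_X ^ c - 1)"

lemma pcompose_power_left: "pcompose (a ^ k) q = pcompose a q ^ k"
  by (induction k) (simp_all add: pcompose_mult pcompose_1)

lemma pcompose_monom: "pcompose (monom 1 k) q = q ^ k"
  by (simp add: monom_altdef pcompose_power_left pcompose_pCons)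

lemma pcompose_one_plus_X: "pcompose one_plus_X q = 1 + q"
  by (simp add: pcompose_pCons)

lemma affine_op_compose:
  "affine_op e c (affine_op e' c' w) = affine_op (e + c * e') (c * c') w"
proof -
  have "pcompose (one_plus_X ^ c' - 1) (one_plus_X ^ c - 1) = one_plus_X ^ (c * c') - 1"
    by (simp add: pcompose_diff pcompose_power_left pcompose_1 pcompose_one_plus_X power_mult)
  then show ?thesis
    unfolding affine_op_def
    by (simp add: pcompose_mult pcompose_power_left pcompose_one_plus_X pcompose_assoc[symmetric]
        power_add power_mult mult.assoc)
qed

lemma affine_op_cong_mod:
  assumes "cong_trunc n P (one_plus_X ^ m) 1" "e mod m = e' mod m" "c mod m = c' mod m"
  shows "cong_trunc n P (affine_op e c w) (affine_op e' c' w)"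
  unfolding affine_op_def
  by (intro cong_trunc_mult cong_trunc_pcompose_right cong_trunc_diff cong_trunc_refl
      one_plus_X_power_cong_mod[OF assms(1)] assms(2,3))

lemma affine_op_cong:
  assumes "cong_trunc n P a b"
  shows "cong_trunc n P (affine_op e c a) (affine_op e c b)"
proof -
  have "coeff (one_plus_X ^ c - 1) 0 = 0"
    by (simp add: coeff_0_power)
  then show ?thesis
    unfolding affine_op_def by (intro cong_trunc_mult cong_trunc_refl cong_trunc_pcompose_left assms)
qed

lemma affine_op_sum_monom:
  "affine_op e c (\<Sum>l<n. monom (a l) l) = (\<Sum>l<n. smult (a l) (affine_op e c (monom 1 l)))"
proof -
  have "monom (a l) l = smult (a l) (monom 1 l)" for l
    by (simp add: smult_monom)
  then show ?thesis
    unfolding affine_op_def pcompose_sum sum_distrib_left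
    by (simp add: pcompose_smult mult_smult_right)
qed

(* (1 + X)^c - 1 = X r with r(0) = c, so the operator is triangular on monomials. *)
lemma affine_op_monom:
  obtains r where "coeff r 0 = int c" "affine_op e c (monom 1 k) = monom 1 k * (one_plus_X ^ e * r ^ k)"
proof -
  obtain a r where ar: "one_plus_X ^ c - 1 = pCons a r"
    by (rule pCons_cases)
  moreover have "coeff (one_plus_X ^ c - 1) 0 = 0"
    by (simp add: coeff_0_power)
  ultimately have r: "one_plus_X ^ c - 1 = pCons 0 r"
    by simp
  have "coeff r 0 = coeff (one_plus_X ^ c - 1) 1"
    using r by simp
  also have "\<dots> = int c"
    by (simp add: coeff_one_plus_X_power)
  finally have "coeff r 0 = int c" .
  moreover have "pCons 0 r = monom 1 1 * r"
    by (simp add: monom_Suc)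
  then have "affine_op e c (monom 1 k) = monom 1 k * (one_plus_X ^ e * r ^ k)"
    by (simp add: affine_op_def r pcompose_monom power_mult_distrib monom_power mult_ac)
  ultimately show ?thesis
    using that by blast
qed

lemma coeff_affine_op_monom_below:
  assumes "i < k"
  shows "coeff (affine_op e c (monom 1 k)) i = 0"
proof -
  obtain r where "affine_op e c (monom 1 k) = monom 1 k * (one_plus_X ^ e * r ^ k)"
    by (rule affine_op_monom)
  then show ?thesis
    using assms by (simp add: coeff_monom_mult)
qed

lemma coeff_affine_op_monom_diag: "coeff (affine_op e c (monom 1 k)) k = int c ^ k"
proof -
  obtain r where r: "coeff r 0 = int c" "affine_op e c (monom 1 k) = monom 1 k * (one_plus_X ^ e * r ^ k)"
    by (rule affine_op_monom)
  then show ?thesis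
    by (simp add: coeff_monom_mult coeff_mult_0 coeff_0_power)
qed

lemma sum_mult_mod_eq:
  fixes f g :: "nat \<Rightarrow> int"
  shows "(\<Sum>l\<in>A. (f l mod P) * (g l mod P)) mod P = (\<Sum>l\<in>A. f l * g l) mod P"
proof -
  have "(\<Sum>l\<in>A. (f l mod P) * (g l mod P)) mod P = (\<Sum>l\<in>A. (f l mod P) * (g l mod P) mod P) mod P"
    by (rule mod_sum_eq[symmetric])
  also have "\<dots> = (\<Sum>l\<in>A. f l * g l mod P) mod P"
    by (simp only: mod_mult_eq)
  also have "\<dots> = (\<Sum>l\<in>A. f l * g l) mod P"
    by (rule mod_sum_eq)
  finally show ?thesis .
qed

lemma cong_trunc_truncate: "cong_trunc n P (\<Sum>l<n. monom (coeff w l) l) w"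
  by (simp add: cong_trunc_def coeff_sum coeff_monom)

(* The matrix of affine_op e c on Z[X]/(P, X^n) in the basis X^(n-1), ..., X, 1;
   listing the basis downwards makes it upper unitriangular. *)
definition affine_matrix :: "nat \<Rightarrow> int \<Rightarrow> nat \<Rightarrow> nat \<Rightarrow> nat \<Rightarrow> nat \<Rightarrow> int" where
  "affine_matrix n P e c = (\<lambda>i j. if i < n \<and> j < n
     then coeff (affine_op e c (monom 1 (n - 1 - j))) (n - 1 - i) mod P else 0)"

lemma affine_matrix_in_carrier:
  assumes "1 < P" "int c mod P = 1"
  shows "affine_matrix n P e c \<in> carrier (unitri n P)"
proof -
  have "int c ^ k mod P = (int c mod P) ^ k mod P" for k
    by (simp add: power_mod)
  then have "int c ^ k mod P = 1" for k
    using assms by simp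
  then show ?thesis
    unfolding unitri_def affine_matrix_def using assms(1)
    by (auto simp: coeff_affine_op_monom_diag coeff_affine_op_monom_below)
qed

lemma unitri_mult_apply:
  "(A \<otimes>\<^bsub>unitri n P\<^esub> B) i j = (if i < n \<and> j < n then (\<Sum>l<n. A i l * B l j) mod P else 0)"
  by (simp add: unitri_def)

lemma affine_matrix_mult_apply:
  assumes "i < n" "j < n"
  shows "(affine_matrix n P e c \<otimes>\<^bsub>unitri n P\<^esub> affine_matrix n P e' c') i j
    = coeff (affine_op e c (affine_op e' c' (monom 1 (n - 1 - j)))) (n - 1 - i) mod P"
proof -
  define I where "I = n - 1 - i"
  define w where "w = affine_op e' c' (monom 1 (n - 1 - j))"
  define a where "a l = coeff (affine_op e c (monom 1 l)) I" for l
  have entries: "affine_matrix n P e c i l * affine_matrix n P e' c' l j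
      = (a (n - 1 - l) mod P) * (coeff w (n - 1 - l) mod P)" if "l < n" for l
    using assms that unfolding affine_matrix_def a_def w_def I_def by simp
  have "(affine_matrix n P e c \<otimes>\<^bsub>unitri n P\<^esub> affine_matrix n P e' c') i j
      = (\<Sum>l<n. affine_matrix n P e c i l * affine_matrix n P e' c' l j) mod P"
    using assms by (simp add: unitri_mult_apply)
  also have "(\<Sum>l<n. affine_matrix n P e c i l * affine_matrix n P e' c' l j)
      = (\<Sum>l<n. (a (n - 1 - l) mod P) * (coeff w (n - 1 - l) mod P))"
    using entries by simp
  also have "(\<Sum>l<n. (a (n - 1 - l) mod P) * (coeff w (n - 1 - l) mod P)) mod P
      = (\<Sum>l<n. a (n - 1 - l) * coeff w (n - 1 - l)) mod P"
    by (rule sum_mult_mod_eq)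
  also have "(\<Sum>l<n. a (n - 1 - l) * coeff w (n - 1 - l)) = (\<Sum>l<n. a l * coeff w l)"
    using sum.nat_diff_reindex[of "\<lambda>l. a l * coeff w l" n] by simp
  also have "(\<Sum>l<n. a l * coeff w l) = coeff (affine_op e c (\<Sum>l<n. monom (coeff w l) l)) I"
    by (simp add: affine_op_sum_monom coeff_sum a_def mult.commute)
  also have "\<dots> mod P = coeff (affine_op e c w) I mod P"
    using affine_op_cong[OF cong_trunc_truncate] assms unfolding I_def cong_trunc_def cong_def by simp
  finally show ?thesis
    by (simp only: w_def I_def)
qed

lemma affine_matrix_mult:
  assumes "cong_trunc n P (one_plus_X ^ m) 1"
    and "(e + c * e') mod m = e'' mod m" "(c * c') mod m = c'' mod m"
  shows "affine_matrix n P e c \<otimes>\<^bsub>unitri n P\<^esub> affine_matrix n P e' c' = affine_matrix n P e'' c''"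
proof (intro ext)
  fix i j
  show "(affine_matrix n P e c \<otimes>\<^bsub>unitri n P\<^esub> affine_matrix n P e' c') i j = affine_matrix n P e'' c'' i j"
  proof (cases "i < n \<and> j < n")
    case True
    have "cong_trunc n P (affine_op e c (affine_op e' c' (monom 1 (n - 1 - j))))
        (affine_op e'' c'' (monom 1 (n - 1 - j)))"
      unfolding affine_op_compose by (rule affine_op_cong_mod[OF assms])
    then have "coeff (affine_op e c (affine_op e' c' (monom 1 (n - 1 - j)))) (n - 1 - i) mod P
        = coeff (affine_op e'' c'' (monom 1 (n - 1 - j))) (n - 1 - i) mod P"
      using True unfolding cong_trunc_def cong_def by simp
    then show ?thesis
      using True affine_matrix_mult_apply[of i n j] by (simp add: affine_matrix_def)
  next
    case False
    then show ?thesis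
      by (simp only: unitri_mult_apply affine_matrix_def if_False)
  qed
qed

lemma affine_matrix_neq_one:
  assumes "1 < P" "0 < n" "\<not> cong_trunc n P (one_plus_X ^ e) 1"
  shows "affine_matrix n P e c \<noteq> \<one>\<^bsub>unitri n P\<^esub>"
proof
  assume one: "affine_matrix n P e c = \<one>\<^bsub>unitri n P\<^esub>"
  have "[coeff (one_plus_X ^ e) i = coeff 1 i] (mod P)" if "i < n" for i
  proof -
    have "affine_matrix n P e c (n - 1 - i) (n - 1) = \<one>\<^bsub>unitri n P\<^esub> (n - 1 - i) (n - 1)"
      by (simp add: one)
    then show ?thesis
      using that assms(1,2)
      by (auto simp: affine_matrix_def unitri_def affine_op_def pcompose_1 coeff_1 cong_def)
  qed
  then have "cong_trunc n P (one_plus_X ^ e) 1"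
    unfolding cong_trunc_def by blast
  with assms(3) show False
    by contradiction
qed

(* (e, c) stands for the affine map x \<mapsto> e + c x of Z/MZ; the product is composition. *)
definition affine_group :: "int \<Rightarrow> int \<Rightarrow> (int \<times> int) monoid" where
  "affine_group M P = \<lparr>carrier = {0..<M} \<times> {c \<in> {0..<M}. c mod P = 1},
     monoid.mult = (\<lambda>(e, c) (e', c'). ((e + c * e') mod M, (c * c') mod M)),
     one = (0, 1)\<rparr>"

definition affine_rep :: "nat \<Rightarrow> int \<Rightarrow> int \<times> int \<Rightarrow> nat \<Rightarrow> nat \<Rightarrow> int" where
  "affine_rep n P = (\<lambda>(e, c). affine_matrix n P (nat e) (nat c))"

lemma affine_rep_hom:
  assumes "prime p" "n \<le> p ^ (s + 1)"
  shows "affine_rep n (int p) \<in> hom (affine_group (int p ^ (s + 1)) (int p)) (unitri n (int p))"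
proof -
  define m where "m = p ^ (s + 1)"
  have M: "int p ^ (s + 1) = int m"
    by (simp add: m_def)
  have cong: "cong_trunc n (int p) (one_plus_X ^ m) 1"
    unfolding m_def by (rule one_plus_X_power_cong_one[OF assms])
  have p: "1 < int p"
    using assms(1) prime_gt_1_nat by simp
  show ?thesis
    unfolding hom_def M
  proof (intro CollectI conjI ballI Pi_I)
    fix x assume "x \<in> carrier (affine_group (int m) (int p))"
    then show "affine_rep n (int p) x \<in> carrier (unitri n (int p))"
      using p by (auto simp: affine_group_def affine_rep_def intro!: affine_matrix_in_carrier)
  next
    fix x y assume "x \<in> carrier (affine_group (int m) (int p))" "y \<in> carrier (affine_group (int m) (int p))"
    then obtain e c e' c' where xy: "x = (e, c)" "y = (e', c')" "0 \<le> e" "0 \<le> c" "0 \<le> e'" "0 \<le> c'"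
      by (auto simp: affine_group_def)
    have "affine_matrix n (int p) (nat e) (nat c) \<otimes>\<^bsub>unitri n (int p)\<^esub> affine_matrix n (int p) (nat e') (nat c')
        = affine_matrix n (int p) (nat ((e + c * e') mod int m)) (nat ((c * c') mod int m))"
      using xy(3-6)
      by (intro affine_matrix_mult[OF cong]) (simp_all add: nat_mod_distrib nat_add_distrib nat_mult_distrib)
    then show "affine_rep n (int p) (x \<otimes>\<^bsub>affine_group (int m) (int p)\<^esub> y)
        = affine_rep n (int p) x \<otimes>\<^bsub>unitri n (int p)\<^esub> affine_rep n (int p) y"
      by (simp add: xy affine_group_def affine_rep_def)
  qed
qed

lemma affine_rep_neq_one:
  assumes "prime p" "p ^ s < n"
    and "(e, c) \<in> carrier (affine_group (int p ^ (s + 1)) (int p))" "e \<noteq> 0"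
  shows "affine_rep n (int p) (e, c) \<noteq> \<one>\<^bsub>unitri n (int p)\<^esub>"
proof -
  have "0 < nat e" "nat e < p ^ Suc s"
    using assms(3,4) by (auto simp: affine_group_def nat_less_iff)
  then have "\<not> cong_trunc n (int p) (one_plus_X ^ nat e) 1"
    by (rule one_plus_X_power_not_cong_one[OF assms(1,2)])
  moreover have "1 < int p" "0 < n"
    using assms(1,2) prime_gt_1_nat by auto
  ultimately show ?thesis
    unfolding affine_rep_def by (simp add: affine_matrix_neq_one)
qed

definition separated_by_homs :: "('a, 'm) monoid_scheme \<Rightarrow> 'a topology \<Rightarrow> ('b, 'n) monoid_scheme \<Rightarrow> bool" where
  "separated_by_homs G T U \<longleftrightarrow> (\<forall>g \<in> carrier G. g \<noteq> \<one>\<^bsub>G\<^esub> \<longrightarrow>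
     (\<exists>\<psi> \<in> hom G U. continuous_map T (discrete_topology (carrier U)) \<psi> \<and> \<psi> g \<noteq> \<one>\<^bsub>U\<^esub>))"

lemma separated_by_homs_via_affine_group:
  fixes G :: "('a, 'm) monoid_scheme"
  assumes "prime p" "p ^ s < n" "n \<le> p ^ (s + 1)"
    and "\<And>g. g \<in> carrier G \<Longrightarrow> g \<noteq> \<one>\<^bsub>G\<^esub> \<Longrightarrow>
      \<exists>\<kappa> \<in> hom G (affine_group (int p ^ (s + 1)) (int p)).
        continuous_map T (discrete_topology (carrier (affine_group (int p ^ (s + 1)) (int p)))) \<kappa>
        \<and> fst (\<kappa> g) \<noteq> 0"
  shows "separated_by_homs G T (unitri n (int p))"
  unfolding separated_by_homs_def
proof (intro ballI impI)
  let ?A = "affine_group (int p ^ (s + 1)) (int p)"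
  fix g assume "g \<in> carrier G" "g \<noteq> \<one>\<^bsub>G\<^esub>"
  then obtain \<kappa> where \<kappa>: "\<kappa> \<in> hom G ?A" "continuous_map T (discrete_topology (carrier ?A)) \<kappa>"
    "fst (\<kappa> g) \<noteq> 0" and "\<kappa> g \<in> carrier ?A"
    using assms(4) by (metis hom_in_carrier)
  have rep: "affine_rep n (int p) \<in> hom ?A (unitri n (int p))"
    by (rule affine_rep_hom[OF assms(1,3)])
  then have "continuous_map (discrete_topology (carrier ?A)) (discrete_topology (carrier (unitri n (int p))))
      (affine_rep n (int p))"
    by (auto simp: hom_def)
  then have "continuous_map T (discrete_topology (carrier (unitri n (int p)))) (affine_rep n (int p) \<circ> \<kappa>)"
    by (rule continuous_map_compose[OF \<kappa>(2)])
  moreover have "affine_rep n (int p) (\<kappa> g) \<noteq> \<one>\<^bsub>unitri n (int p)\<^esub>"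
    using affine_rep_neq_one[OF assms(1,2)] \<open>\<kappa> g \<in> carrier ?A\<close> \<kappa>(3) by (metis prod.collapse)
  ultimately show "\<exists>\<psi> \<in> hom G (unitri n (int p)).
      continuous_map T (discrete_topology (carrier (unitri n (int p)))) \<psi> \<and> \<psi> g \<noteq> \<one>\<^bsub>unitri n (int p)\<^esub>"
    using hom_compose[OF \<kappa>(1) rep] by auto
qed

lemma power_prime_power_cong_one:
  fixes c :: int
  assumes "prime p" "[c = 1] (mod int p)"
  shows "[c ^ p ^ j = 1] (mod int p ^ Suc j)"
proof (induction j)
  case (Suc j)
  define z where "z = c ^ p ^ j"
  have "[z = 1] (mod int p)"
    using Suc.IH unfolding z_def by (rule cong_dvd_modulus) simp
  then have "[(\<Sum>i<p. z ^ i) = (\<Sum>i<p. 1 ^ i)] (mod int p)"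
    by (intro cong_sum cong_pow)
  then have "[(\<Sum>i<p. z ^ i) = int p] (mod int p)"
    by simp
  then have "[(\<Sum>i<p. z ^ i) = 0] (mod int p)"
    by (rule cong_trans) (simp add: cong_0_iff)
  then have "int p dvd (\<Sum>i<p. z ^ i)"
    by (simp add: cong_0_iff)
  moreover have "int p ^ Suc j dvd z - 1"
    using Suc.IH unfolding z_def by (simp add: cong_iff_dvd_diff)
  ultimately have "int p ^ Suc j * int p dvd (z - 1) * (\<Sum>i<p. z ^ i)"
    by (intro mult_dvd_mono)
  then have "int p ^ Suc (Suc j) dvd z ^ p - 1"
    by (simp add: power_diff_1_eq mult.commute)
  then show ?case
    unfolding cong_iff_dvd_diff z_def by (simp only: power_Suc2 power_mult)
qed (use assms(2) in simp)

lemma power_cong_exponent_mod: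
  fixes c :: int
  assumes "prime p" "[c = 1] (mod int p)"
  shows "[c ^ (E mod p ^ (s + 1)) = c ^ E] (mod int p ^ (s + 1))"
proof -
  let ?m = "p ^ (s + 1)"
  have "[c ^ ?m = 1] (mod int p ^ Suc (s + 1))"
    by (rule power_prime_power_cong_one[OF assms])
  then have one: "[c ^ ?m = 1] (mod int p ^ (s + 1))"
    by (rule cong_dvd_modulus) (simp add: le_imp_power_dvd)
  have "c ^ E = (c ^ ?m) ^ (E div ?m) * c ^ (E mod ?m)"
    by (simp flip: power_mult power_add)
  moreover have "[(c ^ ?m) ^ (E div ?m) * c ^ (E mod ?m) = 1 ^ (E div ?m) * c ^ (E mod ?m)] (mod int p ^ (s + 1))"
    by (intro cong_mult cong_pow one cong_refl)
  ultimately show ?thesis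
    by (simp add: cong_sym_eq)
qed

lemma ex_coordinate_nonzero:
  assumes "f \<in> PiE I A" "f \<noteq> (\<lambda>i\<in>I. 0)"
  shows "\<exists>i\<in>I. f i \<noteq> 0"
proof (rule ccontr)
  assume "\<not> (\<exists>i\<in>I. f i \<noteq> 0)"
  then have "f = (\<lambda>i\<in>I. 0)"
    using assms(1) by (intro extensionalityI[of _ I]) (auto simp: PiE_def)
  with assms(2) show False ..
qed

lemma cyc_prod_coordinate_hom:
  assumes "i \<in> I" "1 < M" "1 < P"
  shows "(\<lambda>f. (f i, 1)) \<in> hom (cyc_prod M I) (affine_group M P)"
  using assms by (auto simp: hom_def cyc_prod_def affine_group_def PiE_iff)

lemma continuous_map_cyc_prod_coordinate:
  assumes "i \<in> I" "h \<in> {0..<M} \<rightarrow> S"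
  shows "continuous_map (cyc_prod_top M I) (discrete_topology S) (\<lambda>f. h (f i))"
proof -
  have "continuous_map (discrete_topology {0..<M}) (discrete_topology S) h"
    using assms(2) by simp
  from continuous_map_compose[OF continuous_map_product_projection[OF assms(1)] this]
  show ?thesis
    by (simp add: cyc_prod_top_def o_def)
qed

lemma separated_by_homs_cyc_prod:
  assumes "prime p" "p ^ s < n" "n \<le> p ^ (s + 1)"
  shows "separated_by_homs (cyc_prod (int p ^ (s + 1)) I) (cyc_prod_top (int p ^ (s + 1)) I) (unitri n (int p))"
proof (rule separated_by_homs_via_affine_group[OF assms])
  let ?M = "int p ^ (s + 1)"
  fix g assume g: "g \<in> carrier (cyc_prod ?M I)" "g \<noteq> \<one>\<^bsub>cyc_prod ?M I\<^esub>"
  then obtain i where i: "i \<in> I" "g i \<noteq> 0"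
    using ex_coordinate_nonzero by (fastforce simp: cyc_prod_def)
  have "1 < int p"
    using assms(1) prime_gt_1_nat by simp
  moreover have "1 < ?M"
    using \<open>1 < int p\<close> by (intro one_less_power) simp_all
  ultimately show "\<exists>\<kappa> \<in> hom (cyc_prod ?M I) (affine_group ?M (int p)).
      continuous_map (cyc_prod_top ?M I) (discrete_topology (carrier (affine_group ?M (int p)))) \<kappa>
      \<and> fst (\<kappa> g) \<noteq> 0"
    using i by (intro bexI[OF _ cyc_prod_coordinate_hom] conjI continuous_map_cyc_prod_coordinate)
      (auto simp: affine_group_def)
qed

lemma sdprod_exponent_hom:
  assumes "1 < M" "1 < P"
  shows "(\<lambda>x. (snd x, 1)) \<in> hom (sdprod M c I) (affine_group M P)"
  using assms by (auto simp: hom_def sdprod_def affine_group_def)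

lemma affine_group_carrier_power:
  fixes c :: int
  assumes "prime p" "[c = 1] (mod int p)" "k \<in> {0..<int p ^ (s + 1)}"
  shows "(k, c ^ a mod int p ^ (s + 1)) \<in> carrier (affine_group (int p ^ (s + 1)) (int p))"
proof -
  have "[c ^ a = 1 ^ a] (mod int p)"
    by (intro cong_pow assms(2))
  moreover have "1 < int p"
    using assms(1) prime_gt_1_nat by simp
  ultimately have "c ^ a mod int p ^ (s + 1) mod int p = 1"
    by (simp add: cong_def mod_mod_cancel)
  then show ?thesis
    using assms(1,3) by (simp add: affine_group_def prime_gt_0_nat)
qed

lemma sdprod_coordinate_hom:
  fixes c :: int and s :: nat
  assumes "prime p" "[c = 1] (mod int p)" "i \<in> I"
  defines "M \<equiv> int p ^ (s + 1)"
  shows "(\<lambda>x. (fst x i, c ^ nat (snd x) mod M)) \<in> hom (sdprod M c I) (affine_group M (int p))"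
  unfolding hom_def
proof (intro CollectI conjI ballI Pi_I)
  show "(fst x i, c ^ nat (snd x) mod M) \<in> carrier (affine_group M (int p))"
    if "x \<in> carrier (sdprod M c I)" for x
    using that assms(3) unfolding M_def
    by (intro affine_group_carrier_power[OF assms(1,2)]) (auto simp: sdprod_def PiE_iff)
next
  fix x y assume "x \<in> carrier (sdprod M c I)" "y \<in> carrier (sdprod M c I)"
  then obtain f a g b where xy: "x = (f, a)" "y = (g, b)" "0 \<le> a" "0 \<le> b"
    by (auto simp: sdprod_def)
  have "nat ((a + b) mod M) = (nat a + nat b) mod p ^ (s + 1)"
    using xy(3,4) by (simp add: M_def nat_mod_distrib nat_add_distrib nat_mult_distrib nat_power_eq)
  then have "c ^ nat ((a + b) mod M) mod M = c ^ (nat a + nat b) mod M"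
    using power_cong_exponent_mod[OF assms(1,2)] by (simp add: M_def cong_def)
  also have "\<dots> = (c ^ nat a mod M) * (c ^ nat b mod M) mod M"
    by (simp add: power_add mod_mult_eq)
  finally have "c ^ nat ((a + b) mod M) mod M = (c ^ nat a mod M) * (c ^ nat b mod M) mod M" .
  moreover have "(f i + c ^ nat a * g i) mod M = (f i + (c ^ nat a mod M) * g i) mod M"
    by (metis mod_add_right_eq mod_mult_left_eq)
  ultimately show "(fst (x \<otimes>\<^bsub>sdprod M c I\<^esub> y) i, c ^ nat (snd (x \<otimes>\<^bsub>sdprod M c I\<^esub> y)) mod M)
      = (fst x i, c ^ nat (snd x) mod M) \<otimes>\<^bsub>affine_group M (int p)\<^esub> (fst y i, c ^ nat (snd y) mod M)"
    using assms(3) by (simp add: xy sdprod_def affine_group_def)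
qed

lemma continuous_map_sdprod_exponent:
  assumes "h \<in> {0..<M} \<rightarrow> S"
  shows "continuous_map (sdprod_top M I) (discrete_topology S) (\<lambda>x. h (snd x))"
proof -
  have "continuous_map (discrete_topology {0..<M}) (discrete_topology S) h"
    using assms by simp
  from continuous_map_compose[OF continuous_map_snd this]
  show ?thesis
    by (simp add: sdprod_top_def o_def)
qed

lemma continuous_map_sdprod_coordinate:
  assumes "i \<in> I" "h \<in> {0..<M} \<times> {0..<M} \<rightarrow> S"
  shows "continuous_map (sdprod_top M I) (discrete_topology S) (\<lambda>x. h (fst x i, snd x))"
proof -
  have "continuous_map (sdprod_top M I) (discrete_topology {0..<M}) (\<lambda>x. fst x i)"
    using continuous_map_compose[OF continuous_map_fst continuous_map_product_projection[OF assms(1)]]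
    by (simp add: sdprod_top_def cyc_prod_top_def o_def)
  moreover have "continuous_map (sdprod_top M I) (discrete_topology {0..<M}) snd"
    unfolding sdprod_top_def by (rule continuous_map_snd)
  ultimately have pair: "continuous_map (sdprod_top M I) (discrete_topology ({0..<M} \<times> {0..<M}))
      (\<lambda>x. (fst x i, snd x))"
    unfolding prod_topology_discrete_topology by (rule continuous_map_pairedI)
  have "continuous_map (discrete_topology ({0..<M} \<times> {0..<M})) (discrete_topology S) h"
    using assms(2) by simp
  from continuous_map_compose[OF pair this]
  show ?thesis
    by (simp add: o_def)
qed

lemma separated_by_homs_sdprod:
  fixes c :: int
  assumes "prime p" "p ^ s < n" "n \<le> p ^ (s + 1)" "[c = 1] (mod int p)"
  shows "separated_by_homs (sdprod (int p ^ (s + 1)) c I) (sdprod_top (int p ^ (s + 1)) I) (unitri n (int p))"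
proof (rule separated_by_homs_via_affine_group[OF assms(1-3)])
  let ?M = "int p ^ (s + 1)"
  let ?A = "affine_group ?M (int p)"
  fix g assume g: "g \<in> carrier (sdprod ?M c I)" "g \<noteq> \<one>\<^bsub>sdprod ?M c I\<^esub>"
  have "1 < int p"
    using assms(1) prime_gt_1_nat by simp
  then have "1 < ?M"
    by (intro one_less_power) simp_all
  show "\<exists>\<kappa> \<in> hom (sdprod ?M c I) ?A.
      continuous_map (sdprod_top ?M I) (discrete_topology (carrier ?A)) \<kappa> \<and> fst (\<kappa> g) \<noteq> 0"
  proof (cases "snd g = 0")
    case False
    with \<open>1 < int p\<close> \<open>1 < ?M\<close> show ?thesis
      by (intro bexI[OF _ sdprod_exponent_hom] conjI continuous_map_sdprod_exponent)
        (auto simp: affine_group_def)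
  next
    case True
    then obtain i where i: "i \<in> I" "fst g i \<noteq> 0"
      using g ex_coordinate_nonzero[of "fst g" I] by (cases g) (auto simp: sdprod_def)
    let ?\<kappa> = "\<lambda>x. (fst x i, c ^ nat (snd x) mod ?M)"
    have "?\<kappa> \<in> hom (sdprod ?M c I) ?A"
      by (rule sdprod_coordinate_hom[OF assms(1,4) i(1)])
    moreover have "continuous_map (sdprod_top ?M I) (discrete_topology (carrier ?A))
        (\<lambda>x. (\<lambda>(k, a). (k, c ^ nat a mod ?M)) (fst x i, snd x))"
      using affine_group_carrier_power[OF assms(1,4)]
      by (intro continuous_map_sdprod_coordinate[OF i(1)]) auto
    ultimately show ?thesis
      using i(2) by auto
  qed
qed

lemma inverse_hom:
  assumes "\<phi> \<in> hom G H"
    and "\<And>x y. x \<in> carrier G \<Longrightarrow> y \<in> carrier G \<Longrightarrow> x \<otimes>\<^bsub>G\<^esub> y \<in> carrier G"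
    and "\<And>x. x \<in> carrier G \<Longrightarrow> \<phi>' (\<phi> x) = x"
    and "\<And>y. y \<in> carrier H \<Longrightarrow> \<phi>' y \<in> carrier G \<and> \<phi> (\<phi>' y) = y"
  shows "\<phi>' \<in> hom H G"
  unfolding hom_def
proof (intro CollectI conjI ballI Pi_I)
  fix x y assume "x \<in> carrier H" "y \<in> carrier H"
  then have "\<phi> (\<phi>' x \<otimes>\<^bsub>G\<^esub> \<phi>' y) = x \<otimes>\<^bsub>H\<^esub> y"
    using assms(1,4) by (simp add: hom_mult)
  then show "\<phi>' (x \<otimes>\<^bsub>H\<^esub> y) = \<phi>' x \<otimes>\<^bsub>G\<^esub> \<phi>' y"
    using assms(2,3,4) \<open>x \<in> carrier H\<close> \<open>y \<in> carrier H\<close> by metis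
qed (use assms(4) in blast)

lemma separated_by_homs_iso:
  fixes G :: "('b, 'm) monoid_scheme" and H :: "('a, 'n) monoid_scheme"
  assumes "group H" "\<phi> \<in> iso G H" "homeomorphic_map T TH \<phi>" "topspace T = carrier G"
    and closed: "\<And>x y. x \<in> carrier G \<Longrightarrow> y \<in> carrier G \<Longrightarrow> x \<otimes>\<^bsub>G\<^esub> y \<in> carrier G"
    and "\<one>\<^bsub>G\<^esub> \<in> carrier G" "\<one>\<^bsub>G\<^esub> \<otimes>\<^bsub>G\<^esub> \<one>\<^bsub>G\<^esub> = \<one>\<^bsub>G\<^esub>"
    and "separated_by_homs G T U"
  shows "separated_by_homs H TH U"
  unfolding separated_by_homs_def
proof (intro ballI impI)
  obtain \<phi>' where "homeomorphic_maps T TH \<phi> \<phi>'"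
    using assms(3) homeomorphic_map_maps by blast
  then have cont: "continuous_map TH T \<phi>'" and inv: "\<And>x. x \<in> topspace T \<Longrightarrow> \<phi>' (\<phi> x) = x"
    and inv': "\<And>y. y \<in> topspace TH \<Longrightarrow> \<phi> (\<phi>' y) = y"
    by (auto simp: homeomorphic_maps_def)
  have hom: "\<phi> \<in> hom G H" and "\<phi> ` carrier G = carrier H"
    using assms(2) by (auto simp: iso_def bij_betw_def)
  moreover have "\<phi> ` topspace T = topspace TH"
    using assms(3) by (rule homeomorphic_imp_surjective_map)
  ultimately have top: "topspace TH = carrier H"
    using assms(4) by simp
  have "\<phi>' \<in> carrier H \<rightarrow> carrier G"
    using continuous_map_funspace[OF cont] top assms(4) by simp
  then have inv_hom: "\<phi>' \<in> hom H G"
    using top assms(4) inv inv' by (intro inverse_hom[OF hom closed]) auto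
  have "\<phi> \<one>\<^bsub>G\<^esub> \<otimes>\<^bsub>H\<^esub> \<phi> \<one>\<^bsub>G\<^esub> = \<phi> \<one>\<^bsub>G\<^esub>"
    using hom assms(6,7) by (metis hom_mult)
  then have one: "\<phi> \<one>\<^bsub>G\<^esub> = \<one>\<^bsub>H\<^esub>"
    using group.l_cancel_one[OF assms(1)] hom_in_carrier[OF hom assms(6)] by blast
  fix u assume "u \<in> carrier H" "u \<noteq> \<one>\<^bsub>H\<^esub>"
  moreover have "\<phi> (\<phi>' u) = u"
    using inv' top \<open>u \<in> carrier H\<close> by simp
  ultimately have "\<phi>' u \<in> carrier G" "\<phi>' u \<noteq> \<one>\<^bsub>G\<^esub>"
    using inv_hom one by (auto simp: hom_in_carrier)
  then obtain \<psi> where "\<psi> \<in> hom G U" "continuous_map T (discrete_topology (carrier U)) \<psi>" "\<psi> (\<phi>' u) \<noteq> \<one>\<^bsub>U\<^esub>"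
    using assms(8) unfolding separated_by_homs_def by blast
  then show "\<exists>\<rho> \<in> hom H U. continuous_map TH (discrete_topology (carrier U)) \<rho> \<and> \<rho> u \<noteq> \<one>\<^bsub>U\<^esub>"
    using hom_compose[OF inv_hom] continuous_map_compose[OF cont] by fastforce
qed

lemma separated_by_homs_iso_cyc_prod:
  assumes "group H" "\<phi> \<in> iso (cyc_prod M I) H" "homeomorphic_map (cyc_prod_top M I) TH \<phi>" "0 < M"
    and "separated_by_homs (cyc_prod M I) (cyc_prod_top M I) U"
  shows "separated_by_homs H TH U"
  using assms
  by (intro separated_by_homs_iso[of H \<phi>])
    (auto simp: cyc_prod_def cyc_prod_top_def intro!: restrict_ext)

lemma separated_by_homs_iso_sdprod:
  assumes "group H" "\<phi> \<in> iso (sdprod M c I) H" "homeomorphic_map (sdprod_top M I) TH \<phi>" "0 < M"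
    and "separated_by_homs (sdprod M c I) (sdprod_top M I) U"
  shows "separated_by_homs H TH U"
  using assms
  by (intro separated_by_homs_iso[of H \<phi>])
    (auto simp: sdprod_def sdprod_top_def cyc_prod_top_def intro!: restrict_ext)

theorem proposition5p1:
  fixes p k s n :: nat
    and I :: "'i set"
    and H :: "'a monoid" and TH :: "'a topology"
  assumes "prime p" and "k \<ge> 1" and "s \<ge> 1" and "n = p ^ s + 1"
    and "group H"
    and "(\<exists>\<phi>. \<phi> \<in> iso (cyc_prod (int p ^ (s+1)) I) H
              \<and> homeomorphic_map (cyc_prod_top (int p ^ (s+1)) I) TH \<phi>)
       \<or> (\<exists>\<phi>. \<phi> \<in> iso (sdprod (int p ^ (s+1)) (int p ^ k + 1) I) H
              \<and> homeomorphic_map (sdprod_top (int p ^ (s+1)) I) TH \<phi>)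
       \<or> (p = 2 \<and> (\<exists>\<phi>. \<phi> \<in> iso (sdprod (2 ^ (s+1)) (- (2 ^ k + 1)) I) H
              \<and> homeomorphic_map (sdprod_top (2 ^ (s+1)) I) TH \<phi>))
       \<or> (p = 2 \<and> (\<exists>\<phi>. \<phi> \<in> iso (sdprod (2 ^ (s+1)) (- 1) I) H
              \<and> homeomorphic_map (sdprod_top (2 ^ (s+1)) I) TH \<phi>))"
  shows "\<forall>u \<in> carrier H. u \<noteq> \<one>\<^bsub>H\<^esub> \<longrightarrow>
           (\<exists>\<rho> \<in> hom H (unitri n (int p)).
              continuous_map TH (discrete_topology (carrier (unitri n (int p)))) \<rho>
              \<and> \<rho> u \<noteq> \<one>\<^bsub>unitri n (int p)\<^esub>)"
proof -
  have p: "2 \<le> p"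
    using assms(1) by (rule prime_ge_2_nat)
  then have n: "p ^ s < n" "n \<le> p ^ (s + 1)"
    using assms(4) by (auto intro: order.trans[OF _ mult_right_mono[of 2 p "p ^ s"]])
  have M: "0 < int p ^ (s + 1)"
    using p by simp
  note sdprod_case = separated_by_homs_iso_sdprod[OF assms(5) _ _ M
      separated_by_homs_sdprod[OF assms(1) n]]
  have "[int p ^ k + 1 = 1] (mod int p)" "p = 2 \<Longrightarrow> [- (2 ^ k + 1) = 1] (mod int p)"
    "p = 2 \<Longrightarrow> [- 1 = 1] (mod int p)"
    using assms(2) by (auto simp: cong_iff_dvd_diff)
  with assms(6) have "separated_by_homs H TH (unitri n (int p))"
    using separated_by_homs_iso_cyc_prod[OF assms(5) _ _ M separated_by_homs_cyc_prod[OF assms(1) n]]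
      sdprod_case by fastforce
  then show ?thesis
    unfolding separated_by_homs_def .
qed

end
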